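(* Consider the simulated dynamics: $\boldsymbol{w}_i(t+1)=\boldsymbol{w}_i(t)-\eta\,a_i(t)\frac1n\sum_{j=1}^n(\boldsymbol{a}(t)^\top\boldsymbol{W}(t)\boldsymbol{x}_j-y_j)\boldsymbol{x}_j$ for the rows $\boldsymbol{w}_i$ of $\boldsymbol{W}\in\mathbb{R}^{m\times d}$, and $a_i(t+1)=a_i(t)+\delta_i(t)$, where $\delta_i(t)=-\eta^{1/4}$ if $a_i(t)=\eta^{1/4}$, $\delta_i(t)=\eta^{1/4}$ if $a_i(t)=-\eta^{1/4}$, and $\delta_i(t)$ is uniform on $\{-\eta^{1/4},\eta^{1/4}\}$ (independently) if $a_i(t)=0$, with $a_i(0)=\pm\eta^{1/4}$ each with probability $1/4$ and $a_i(0)=0$ with probability $1/2$, independently over $i$. Let $\boldsymbol{\theta}(t)=\boldsymbol{a}(t)^\top\boldsymbol{W}(t)$. Then for all $t$, $\mathbb{E}[\boldsymbol{\theta}(t)]=\mathbb{E}[\boldsymbol{\theta}(0)]$.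
   Context: $\boldsymbol{x}_j\in\mathbb{R}^d$, $y_j\in\mathbb{R}$ ($j\in[n]$) are the training data; $\eta>0$ is the step size; $\boldsymbol{W}(0)$ is initialized with i.i.d. entries $\frac1{\sqrt d}\mathcal{N}(0,1)$ independent of $\boldsymbol{a}$. *)

theory Defs
  imports "HOL-Probability.Probability"
begin

(* Vectors in R^d are functions 'd => real ('d finite, d = CARD('d));
   W in R^{m x d} is 'm => 'd => real (row i = W i); data index j ranges over 'n, n = CARD('n). *)

definition theta :: "('m::finite \<Rightarrow> real) \<Rightarrow> ('m \<Rightarrow> 'd::finite \<Rightarrow> real) \<Rightarrow> 'd \<Rightarrow> real" where
  "theta a W = (\<lambda>k. \<Sum>i\<in>UNIV. a i * W i k)"

definition grad :: "('n::finite \<Rightarrow> 'd::finite \<Rightarrow> real) \<Rightarrow> ('n \<Rightarrow> real) \<Rightarrow> ('d \<Rightarrow> real) \<Rightarrow> 'd \<Rightarrow> real" where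
  "grad x y th = (\<lambda>k. (1 / real CARD('n)) *
      (\<Sum>j\<in>UNIV. ((\<Sum>l\<in>UNIV. th l * x j l) - y j) * x j k))"

(* increment delta_i(t); the boolean c is the fair coin used when a_i(t) = 0 *)
definition delta :: "real \<Rightarrow> bool \<Rightarrow> real \<Rightarrow> real" where
  "delta \<eta> c a = (let e = \<eta> powr (1/4) in
     if a = e then - e else if a = - e then e
     else if a = 0 then (if c then e else - e) else 0)"

fun sim :: "real \<Rightarrow> ('n::finite \<Rightarrow> 'd::finite \<Rightarrow> real) \<Rightarrow> ('n \<Rightarrow> real) \<Rightarrow>
    ('m::finite \<Rightarrow> 'd \<Rightarrow> real) \<Rightarrow> ('m \<Rightarrow> real) \<Rightarrow> (nat \<Rightarrow> 'm \<Rightarrow> bool) \<Rightarrow> nat \<Rightarrow>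
    ('m \<Rightarrow> 'd \<Rightarrow> real) \<times> ('m \<Rightarrow> real)" where
  "sim \<eta> x y W0 a0 c 0 = (W0, a0)"
| "sim \<eta> x y W0 a0 c (Suc t) =
     (let (W, a) = sim \<eta> x y W0 a0 c t; g = grad x y (theta a W) in
       ((\<lambda>i k. W i k - \<eta> * a i * g k), (\<lambda>i. a i + delta \<eta> (c t i) (a i))))"

definition theta_at :: "real \<Rightarrow> ('n::finite \<Rightarrow> 'd::finite \<Rightarrow> real) \<Rightarrow> ('n \<Rightarrow> real) \<Rightarrow> nat \<Rightarrow>
    ('m::finite \<Rightarrow> 'd \<Rightarrow> real) \<times> ('m \<Rightarrow> real) \<times> (nat \<Rightarrow> 'm \<Rightarrow> bool) \<Rightarrow> 'd \<Rightarrow> real" where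
  "theta_at \<eta> x y t \<omega> =
     (case sim \<eta> x y (fst \<omega>) (fst (snd \<omega>)) (snd (snd \<omega>)) t of (W, a) \<Rightarrow> theta a W)"

definition W0_measure :: "('m::finite \<Rightarrow> 'd::finite \<Rightarrow> real) measure" where
  "W0_measure = (\<Pi>\<^sub>M i\<in>UNIV. \<Pi>\<^sub>M k\<in>UNIV.
      density lborel (normal_density 0 (1 / sqrt (real CARD('d)))))"

definition a0_pmf :: "real \<Rightarrow> real pmf" where
  "a0_pmf \<eta> = pmf_of_multiset {# \<eta> powr (1/4), - (\<eta> powr (1/4)), 0, 0 #}"

definition a0_measure :: "real \<Rightarrow> ('m::finite \<Rightarrow> real) measure" where
  "a0_measure \<eta> = (\<Pi>\<^sub>M i\<in>UNIV. measure_pmf (a0_pmf \<eta>))"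

definition coin_measure :: "(nat \<Rightarrow> 'm::finite \<Rightarrow> bool) measure" where
  "coin_measure = (\<Pi>\<^sub>M t\<in>UNIV. \<Pi>\<^sub>M i\<in>UNIV. measure_pmf (bernoulli_pmf (1/2)))"

definition sim_space :: "real \<Rightarrow>
    (('m::finite \<Rightarrow> 'd::finite \<Rightarrow> real) \<times> ('m \<Rightarrow> real) \<times> (nat \<Rightarrow> 'm \<Rightarrow> bool)) measure" where
  "sim_space \<eta> = W0_measure \<Otimes>\<^sub>M (a0_measure \<eta> \<Otimes>\<^sub>M coin_measure)"

end

theory Submission
  imports Defs
begin

(*
  At time 0 the claim holds because a(0) has mean zero and is independent of W(0).
  For the step t -> t+1, every a_i(t) lies in {0, +-eta^(1/4)}: a neuron with
  a_i(t) <> 0 is switched off (a_i(t+1) = 0), while a neuron with a_i(t) = 0 keeps its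
  row, w_i(t+1) = w_i(t), and receives a_i(t+1) = +-eta^(1/4) from a fresh fair coin.
  Hence theta(t+1) = sum over {i. a_i(t) = 0} of +-eta^(1/4) w_i(t), whose expectation
  over the coins of time t vanishes, whatever happened before; so E theta(t) = 0 = E theta(0).
  Since the state at time t depends only on W(0), a(0) and the finitely many coins of
  the times before t, for fixed W(0) the expectation is a finite one over a pmf, to
  which the product measure is transferred.
*)

text \<open>A product of pmfs in the sense of \<^const>\<open>PiM\<close> is not itself a \<^const>\<open>measure_pmf\<close>
  (its \<open>\<sigma>\<close>-algebra is not discrete), so it is related to \<^const>\<open>Pi_pmf\<close> as a pushforward.\<close>
definition is_image_of_pmf :: "'a measure \<Rightarrow> 'b pmf \<Rightarrow> ('b \<Rightarrow> 'a) \<Rightarrow> bool" where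
  "is_image_of_pmf M p f \<longleftrightarrow> f \<in> measurable (measure_pmf p) M \<and> M = distr (measure_pmf p) M f"

lemma is_image_of_pmf_measure_pmf: "is_image_of_pmf (measure_pmf p) p (\<lambda>x. x)"
  unfolding is_image_of_pmf_def by (simp add: distr_id2)

lemma is_image_of_pmf_prob_space: "is_image_of_pmf M p f \<Longrightarrow> prob_space M"
  unfolding is_image_of_pmf_def by (metis measure_pmf.prob_space_distr)

lemma integral_is_image_of_pmf:
  fixes G :: "'a \<Rightarrow> real"
  assumes "is_image_of_pmf M p f" "G \<in> borel_measurable M"
  shows "integral\<^sup>L M G = measure_pmf.expectation p (\<lambda>z. G (f z))"
  using assms integral_distr[of f "measure_pmf p" M G] unfolding is_image_of_pmf_def by metis

lemma emeasure_pair_pmf_Times: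
  "emeasure (pair_pmf p q) (U \<times> V) = emeasure (measure_pmf p) U * emeasure (measure_pmf q) V"
proof -
  have "emeasure (pair_pmf p q) (U \<times> V) = (\<integral>\<^sup>+z. indicator (U \<times> V) z \<partial>pair_pmf p q)"
    by simp
  also have "\<dots> = (\<integral>\<^sup>+a. \<integral>\<^sup>+b. indicator U a * indicator V b \<partial>q \<partial>p)"
    by (subst nn_integral_pair_pmf') (simp add: indicator_times)
  also have "\<dots> = (\<integral>\<^sup>+a. indicator U a * emeasure (measure_pmf q) V \<partial>p)"
    by (simp add: nn_integral_cmult)
  also have "\<dots> = emeasure (measure_pmf p) U * emeasure (measure_pmf q) V"
    by (simp add: nn_integral_multc)
  finally show ?thesis .
qed

lemma is_image_of_pmf_pair:
  assumes "is_image_of_pmf M p f" "is_image_of_pmf N q g"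
  shows "is_image_of_pmf (M \<Otimes>\<^sub>M N) (pair_pmf p q) (map_prod f g)"
proof -
  have mf: "f \<in> measurable p M" and ef: "M = distr p M f"
    and mg: "g \<in> measurable q N" and eg: "N = distr q N g"
    using assms unfolding is_image_of_pmf_def by auto
  have meas: "map_prod f g \<in> measurable (pair_pmf p q) (M \<Otimes>\<^sub>M N)"
    using mf mg by (auto simp: space_pair_measure measurable_def Pi_iff)
  interpret M: prob_space M using is_image_of_pmf_prob_space[OF assms(1)] .
  interpret N: prob_space N using is_image_of_pmf_prob_space[OF assms(2)] .
  have "M \<Otimes>\<^sub>M N = distr (pair_pmf p q) (M \<Otimes>\<^sub>M N) (map_prod f g)"
  proof (rule pair_measure_eqI)
    fix A B assume A: "A \<in> sets M" and B: "B \<in> sets N"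
    have "emeasure (distr (pair_pmf p q) (M \<Otimes>\<^sub>M N) (map_prod f g)) (A \<times> B)
        = emeasure (pair_pmf p q) (f -` A \<times> g -` B)"
      using A B meas by (subst emeasure_distr) (auto simp: map_prod_vimage)
    also have "\<dots> = emeasure (distr p M f) A * emeasure (distr q N g) B"
      using A B mf mg by (simp add: emeasure_pair_pmf_Times emeasure_distr)
    finally show "emeasure M A * emeasure N B
        = emeasure (distr (pair_pmf p q) (M \<Otimes>\<^sub>M N) (map_prod f g)) (A \<times> B)"
      using ef eg by simp
  qed (simp_all add: M.sigma_finite_measure_axioms N.sigma_finite_measure_axioms)
  then show ?thesis using meas unfolding is_image_of_pmf_def by simp
qed

lemma is_image_of_pmf_PiM:
  assumes fin: "finite I" and rep: "\<And>i. is_image_of_pmf (M i) (p i) (\<lambda>x. x)"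
  shows "is_image_of_pmf (PiM I M) (Pi_pmf I dflt p) (\<lambda>x. restrict x I)"
proof -
  have em: "M i = distr (p i) (M i) (\<lambda>x. x)" and m: "(\<lambda>x. x) \<in> measurable (p i) (M i)" for i
    using rep[of i] unfolding is_image_of_pmf_def by auto
  have "space (M i) = UNIV" for i
    using m[of i] by (auto simp: measurable_def)
  then have meas: "(\<lambda>x. restrict x I) \<in> measurable (Pi_pmf I dflt p) (PiM I M)"
    by (simp add: space_PiM)
  interpret product_prob_space M
    by (intro product_prob_spaceI) (rule is_image_of_pmf_prob_space[OF rep])
  have "distr (Pi_pmf I dflt p) (PiM I M) (\<lambda>x. restrict x I) = PiM I M"
  proof (rule PiM_eqI)
    fix A assume A: "\<And>i. i \<in> I \<Longrightarrow> A i \<in> sets (M i)"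
    have "emeasure (distr (Pi_pmf I dflt p) (PiM I M) (\<lambda>x. restrict x I)) (PiE I A)
        = emeasure (Pi_pmf I dflt p) ((\<lambda>x. restrict x I) -` PiE I A)"
      using A meas by (subst emeasure_distr) (auto intro!: sets_PiM_I_finite fin)
    also have "(\<lambda>x. restrict x I) -` PiE I A = Pi I A"
      by (auto simp: PiE_def Pi_def)
    also have "emeasure (Pi_pmf I dflt p) (Pi I A) = (\<Prod>i\<in>I. emeasure (p i) (A i))"
      by (simp add: measure_pmf.emeasure_eq_measure measure_Pi_pmf_Pi fin prod_ennreal)
    also have "\<dots> = (\<Prod>i\<in>I. emeasure (M i) (A i))"
    proof (intro prod.cong refl)
      fix i assume "i \<in> I"
      then show "emeasure (p i) (A i) = emeasure (M i) (A i)"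
        using A by (subst em) (simp add: emeasure_distr[OF m])
    qed
    finally show "emeasure (distr (Pi_pmf I dflt p) (PiM I M) (\<lambda>x. restrict x I)) (PiE I A)
        = (\<Prod>i\<in>I. emeasure (M i) (A i))" .
  qed (simp_all add: fin)
  then show ?thesis using meas unfolding is_image_of_pmf_def by simp
qed

lemma is_image_of_pmf_PiM_UNIV:
  fixes M :: "'i::finite \<Rightarrow> 'b measure"
  assumes "\<And>i. is_image_of_pmf (M i) (p i) (\<lambda>x. x)"
  shows "is_image_of_pmf (PiM UNIV M) (Pi_pmf UNIV dflt p) (\<lambda>x. x)"
proof -
  have "is_image_of_pmf (PiM UNIV M) (Pi_pmf UNIV dflt p) (\<lambda>x. restrict x UNIV)"
    by (rule is_image_of_pmf_PiM) (simp_all add: assms)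
  moreover have "(\<lambda>x :: 'i \<Rightarrow> 'b. restrict x UNIV) = (\<lambda>x. x)"
    by (simp add: restrict_def)
  ultimately show ?thesis
    by (simp only:)
qed

lemma expectation_pair_pmf_finite:
  fixes f :: "'a \<times> 'b \<Rightarrow> real"
  assumes "finite (set_pmf p)" "finite (set_pmf q)"
  shows "measure_pmf.expectation (pair_pmf p q) f =
         measure_pmf.expectation p (\<lambda>a. measure_pmf.expectation q (\<lambda>b. f (a, b)))"
proof -
  have "measure_pmf.expectation (pair_pmf p q) f = (\<Sum>z\<in>set_pmf p \<times> set_pmf q. f z * pmf (pair_pmf p q) z)"
    using assms by (intro integral_measure_pmf_real) auto
  also have "\<dots> = (\<Sum>a\<in>set_pmf p. \<Sum>b\<in>set_pmf q. f (a, b) * (pmf p a * pmf q b))"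
    unfolding sum.cartesian_product by (intro sum.cong) (auto simp: pmf_pair)
  also have "\<dots> = (\<Sum>a\<in>set_pmf p. (\<Sum>b\<in>set_pmf q. f (a, b) * pmf q b) * pmf p a)"
    by (simp add: sum_distrib_left sum_distrib_right mult_ac)
  also have "\<dots> = measure_pmf.expectation p (\<lambda>a. measure_pmf.expectation q (\<lambda>b. f (a, b)))"
    using assms by (simp add: integral_measure_pmf_real[of "set_pmf p"] integral_measure_pmf_real[of "set_pmf q"])
  finally show ?thesis .
qed

lemma finite_set_Pi_pmf:
  assumes "finite A" "\<And>i. i \<in> A \<Longrightarrow> finite (set_pmf (p i))"
  shows "finite (set_pmf (Pi_pmf A dflt p))"
  using assms by (intro finite_subset[OF set_Pi_pmf_subset'] finite_PiE_dflt) auto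

lemma expectation_Pi_pmf_component:
  fixes f :: "'b \<Rightarrow> real"
  assumes "finite I" "i \<in> I"
  shows "measure_pmf.expectation (Pi_pmf I dflt p) (\<lambda>a. f (a i)) = measure_pmf.expectation (p i) f"
proof -
  have "measure_pmf.expectation (Pi_pmf I dflt p) (\<lambda>a. f (a i))
      = measure_pmf.expectation (map_pmf (\<lambda>a. a i) (Pi_pmf I dflt p)) f"
    by (simp add: integral_map_pmf)
  also have "map_pmf (\<lambda>a. a i) (Pi_pmf I dflt p) = p i"
    using assms by (simp add: Pi_pmf_component)
  finally show ?thesis .
qed

lemma integral_pair_PiM_restrict:
  fixes G :: "'a \<times> ('i \<Rightarrow> 'b) \<Rightarrow> real"
  assumes "prob_space A" "product_prob_space M" "finite J" "J \<subseteq> I"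
    and G: "G \<in> borel_measurable (A \<Otimes>\<^sub>M PiM J M)"
  shows "(\<integral>z. G (fst z, restrict (snd z) J) \<partial>(A \<Otimes>\<^sub>M PiM I M)) = integral\<^sup>L (A \<Otimes>\<^sub>M PiM J M) G"
proof -
  interpret A: prob_space A by fact
  interpret product_prob_space M by fact
  interpret PJ: prob_space "PiM J M"
    by (rule prob_space_PiM) (rule M.prob_space_axioms)
  have restrict: "(\<lambda>c. restrict c J) \<in> measurable (PiM I M) (PiM J M)"
    using assms(4) by (rule measurable_restrict_subset)
  have "distr (A \<Otimes>\<^sub>M PiM I M) (A \<Otimes>\<^sub>M PiM J M) (\<lambda>(a, c). (a, restrict c J))
      = distr A A (\<lambda>a. a) \<Otimes>\<^sub>M distr (PiM I M) (PiM J M) (\<lambda>c. restrict c J)"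
    using restrict
    by (intro pair_measure_distr[symmetric]) (simp_all add: distr_PiM_restrict_finite assms(3,4) PJ.sigma_finite_measure_axioms)
  also have "\<dots> = A \<Otimes>\<^sub>M PiM J M"
    by (simp add: distr_PiM_restrict_finite assms(3,4))
  finally have "integral\<^sup>L (A \<Otimes>\<^sub>M PiM J M) G
      = integral\<^sup>L (distr (A \<Otimes>\<^sub>M PiM I M) (A \<Otimes>\<^sub>M PiM J M) (\<lambda>(a, c). (a, restrict c J))) G"
    by simp
  also have "\<dots> = (\<integral>z. G (fst z, restrict (snd z) J) \<partial>(A \<Otimes>\<^sub>M PiM I M))"
    using restrict G by (subst integral_distr) (auto simp: split_beta)
  finally show ?thesis ..
qed

lemma measurable_delta[measurable]:
  assumes [measurable]: "a \<in> borel_measurable M" "c \<in> measurable M (count_space UNIV)"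
  shows "(\<lambda>\<omega>. delta \<eta> (c \<omega>) (a \<omega>)) \<in> borel_measurable M"
  unfolding delta_def Let_def by measurable

lemma sim_Suc_eq:
  "sim \<eta> x y W0 a0 c (Suc t) = (let S = sim \<eta> x y W0 a0 c t in
     ((\<lambda>i k. fst S i k - \<eta> * snd S i * grad x y (theta (snd S) (fst S)) k),
      (\<lambda>i. snd S i + delta \<eta> (c t i) (snd S i))))"
  by (simp add: split_beta Let_def)

lemma sim_cong_coins:
  "(\<And>s. s < t \<Longrightarrow> c s = c' s) \<Longrightarrow> sim \<eta> x y W0 a0 c t = sim \<eta> x y W0 a0 c' t"
  by (induction t) (auto simp: split_beta Let_def)

lemma sim_weights_range:
  assumes "\<And>i. a0 i \<in> {0, \<eta> powr (1/4), - (\<eta> powr (1/4))}"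
  shows "snd (sim \<eta> x y W0 a0 c t) i \<in> {0, \<eta> powr (1/4), - (\<eta> powr (1/4))}"
proof (induction t arbitrary: i)
  case 0
  then show ?case using assms by simp
next
  case (Suc t)
  have "\<eta> powr (1/4) \<ge> 0" by simp
  with Suc[of i] show ?case by (auto simp: split_beta Let_def delta_def)
qed

lemma measurable_sim:
  fixes x :: "'n::finite \<Rightarrow> 'd::finite \<Rightarrow> real" and W0 :: "'m::finite \<Rightarrow> 'd \<Rightarrow> real"
  assumes "\<And>i. (\<lambda>\<omega>. a \<omega> i) \<in> borel_measurable M"
    and "\<And>s i. s < t \<Longrightarrow> (\<lambda>\<omega>. c \<omega> s i) \<in> measurable M (count_space UNIV)"
  shows "(\<lambda>\<omega>. fst (sim \<eta> x y W0 (a \<omega>) (c \<omega>) t) i k) \<in> borel_measurable M"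
    and "(\<lambda>\<omega>. snd (sim \<eta> x y W0 (a \<omega>) (c \<omega>) t) i) \<in> borel_measurable M"
proof -
  have "(\<forall>i k. (\<lambda>\<omega>. fst (sim \<eta> x y W0 (a \<omega>) (c \<omega>) t) i k) \<in> borel_measurable M) \<and>
        (\<forall>i. (\<lambda>\<omega>. snd (sim \<eta> x y W0 (a \<omega>) (c \<omega>) t) i) \<in> borel_measurable M)"
    using assms(2)
  proof (induction t)
    case 0
    then show ?case using assms(1) by simp
  next
    case (Suc t)
    have [measurable]: "(\<lambda>\<omega>. c \<omega> t i) \<in> measurable M (count_space UNIV)" for i
      using Suc.prems by simp
    have [measurable]: "(\<lambda>\<omega>. fst (sim \<eta> x y W0 (a \<omega>) (c \<omega>) t) i k) \<in> borel_measurable M"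
      "(\<lambda>\<omega>. snd (sim \<eta> x y W0 (a \<omega>) (c \<omega>) t) i) \<in> borel_measurable M" for i k
      using Suc by auto
    show ?case unfolding sim_Suc_eq Let_def grad_def theta_def by simp measurable
  qed
  then show "(\<lambda>\<omega>. fst (sim \<eta> x y W0 (a \<omega>) (c \<omega>) t) i k) \<in> borel_measurable M"
    and "(\<lambda>\<omega>. snd (sim \<eta> x y W0 (a \<omega>) (c \<omega>) t) i) \<in> borel_measurable M"
    by auto
qed

definition a0_vector_pmf :: "real \<Rightarrow> ('m::finite \<Rightarrow> real) pmf" where
  "a0_vector_pmf \<eta> = Pi_pmf UNIV undefined (\<lambda>_. a0_pmf \<eta>)"

definition coin_vector_pmf :: "('m::finite \<Rightarrow> bool) pmf" where
  "coin_vector_pmf = Pi_pmf UNIV undefined (\<lambda>_. bernoulli_pmf (1/2))"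

definition coins_pmf :: "nat \<Rightarrow> (nat \<Rightarrow> 'm::finite \<Rightarrow> bool) pmf" where
  "coins_pmf t = Pi_pmf {..<t} undefined (\<lambda>_. coin_vector_pmf)"

lemma set_a0_pmf: "set_pmf (a0_pmf \<eta>) = {\<eta> powr (1/4), - (\<eta> powr (1/4)), 0}"
  unfolding a0_pmf_def by (subst set_pmf_of_multiset) auto

lemma finite_set_a0_vector_pmf: "finite (set_pmf (a0_vector_pmf \<eta>))"
  unfolding a0_vector_pmf_def by (rule finite_set_Pi_pmf) (auto simp: set_a0_pmf)

lemma finite_set_coins_pmf: "finite (set_pmf (coins_pmf t))"
  unfolding coins_pmf_def coin_vector_pmf_def by (intro finite_set_Pi_pmf) auto

lemma set_a0_vector_pmf_range:
  assumes "a \<in> set_pmf (a0_vector_pmf \<eta>)"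
  shows "a i \<in> {0, \<eta> powr (1/4), - (\<eta> powr (1/4))}"
proof -
  have "set_pmf (a0_vector_pmf \<eta>) \<subseteq> PiE_dflt UNIV undefined (set_pmf \<circ> (\<lambda>_. a0_pmf \<eta>))"
    unfolding a0_vector_pmf_def by (rule set_Pi_pmf_subset') simp
  with assms have "a \<in> PiE_dflt UNIV undefined (set_pmf \<circ> (\<lambda>_. a0_pmf \<eta>))"
    by blast
  then show ?thesis by (auto simp: PiE_dflt_def set_a0_pmf)
qed

lemma expectation_a0_pmf:
  assumes "\<eta> > 0"
  shows "measure_pmf.expectation (a0_pmf \<eta>) (\<lambda>v. v) = 0"
proof -
  define e where "e = \<eta> powr (1/4)"
  have e: "e > 0" using assms by (simp add: e_def)
  have "measure_pmf.expectation (a0_pmf \<eta>) (\<lambda>v. v) = (\<Sum>v\<in>{e, -e, 0}. v * pmf (a0_pmf \<eta>) v)"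
    by (intro integral_measure_pmf_real) (auto simp: set_a0_pmf e_def)
  also have "\<dots> = e * pmf (a0_pmf \<eta>) e + (- e) * pmf (a0_pmf \<eta>) (-e)"
    using e by simp
  also have "pmf (a0_pmf \<eta>) e = 1/4"
    unfolding a0_pmf_def e_def using e by (subst pmf_of_multiset) (auto simp: e_def)
  also have "pmf (a0_pmf \<eta>) (-e) = 1/4"
    unfolding a0_pmf_def e_def using e by (subst pmf_of_multiset) (auto simp: e_def)
  finally show ?thesis by simp
qed

lemma expectation_theta_a0_vector_pmf:
  fixes W :: "'m::finite \<Rightarrow> 'd::finite \<Rightarrow> real"
  assumes "\<eta> > 0"
  shows "measure_pmf.expectation (a0_vector_pmf \<eta>) (\<lambda>a. theta a W k) = 0"
proof -
  have "measure_pmf.expectation (a0_vector_pmf \<eta>) (\<lambda>a. theta a W k)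
      = (\<Sum>i\<in>UNIV. measure_pmf.expectation (a0_vector_pmf \<eta>) (\<lambda>a. a i * W i k))"
    unfolding theta_def
    by (rule Bochner_Integration.integral_sum) (auto intro: integrable_measure_pmf_finite finite_set_a0_vector_pmf)
  also have "\<dots> = 0"
    by (simp add: a0_vector_pmf_def expectation_Pi_pmf_component[where f = "\<lambda>v. v"]
        expectation_a0_pmf[OF assms])
  finally show ?thesis .
qed

lemma theta_after_step:
  fixes W :: "'m::finite \<Rightarrow> 'd::finite \<Rightarrow> real"
  assumes "\<And>i. a i \<in> {0, \<eta> powr (1/4), - (\<eta> powr (1/4))}"
  shows "theta (\<lambda>i. a i + delta \<eta> (b i) (a i)) (\<lambda>i k. W i k - \<eta> * a i * g k) k
       = (\<Sum>i\<in>UNIV. if a i = 0 then (if b i then \<eta> powr (1/4) else - (\<eta> powr (1/4))) * W i k else 0)"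
  unfolding theta_def
proof (intro sum.cong refl)
  fix i
  have "\<eta> powr (1/4) \<ge> 0" by simp
  then show "(a i + delta \<eta> (b i) (a i)) * (W i k - \<eta> * a i * g k)
      = (if a i = 0 then (if b i then \<eta> powr (1/4) else - (\<eta> powr (1/4))) * W i k else 0)"
    using assms[of i] by (auto simp: delta_def Let_def)
qed

lemma expectation_theta_after_coin_step:
  fixes W :: "'m::finite \<Rightarrow> 'd::finite \<Rightarrow> real"
  assumes "\<And>i. a i \<in> {0, \<eta> powr (1/4), - (\<eta> powr (1/4))}"
  shows "measure_pmf.expectation coin_vector_pmf
     (\<lambda>b. theta (\<lambda>i. a i + delta \<eta> (b i) (a i)) (\<lambda>i k. W i k - \<eta> * a i * g k) k) = 0"
proof -
  define e where "e = \<eta> powr (1/4)"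
  have fin: "finite (set_pmf (coin_vector_pmf :: ('m \<Rightarrow> bool) pmf))"
    by (simp add: coin_vector_pmf_def)
  have "measure_pmf.expectation coin_vector_pmf
     (\<lambda>b. theta (\<lambda>i. a i + delta \<eta> (b i) (a i)) (\<lambda>i k. W i k - \<eta> * a i * g k) k)
    = (\<Sum>i\<in>UNIV. measure_pmf.expectation coin_vector_pmf
        (\<lambda>b. if a i = 0 then (if b i then e else - e) * W i k else 0))"
    unfolding theta_after_step[OF assms] e_def
    by (rule Bochner_Integration.integral_sum) (auto intro: integrable_measure_pmf_finite[OF fin])
  also have "\<dots> = 0"
  proof (intro sum.neutral ballI)
    fix i :: 'm
    show "measure_pmf.expectation coin_vector_pmf
        (\<lambda>b. if a i = 0 then (if b i then e else - e) * W i k else 0) = 0"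
      using expectation_Pi_pmf_component[of UNIV i undefined "\<lambda>_. bernoulli_pmf (1/2)"
          "\<lambda>c. if a i = 0 then (if c then e else - e) * W i k else 0"]
      by (simp add: coin_vector_pmf_def)
  qed
  finally show ?thesis .
qed

lemma expectation_theta_at_Suc_last_coin:
  fixes x :: "'n::finite \<Rightarrow> 'd::finite \<Rightarrow> real" and W0 :: "'m::finite \<Rightarrow> 'd \<Rightarrow> real"
  assumes "a \<in> set_pmf (a0_vector_pmf \<eta>)"
  shows "measure_pmf.expectation coin_vector_pmf
     (\<lambda>b. theta_at \<eta> x y (Suc s) (W0, a, c(s := b)) k) = 0"
proof -
  define S where "S = sim \<eta> x y W0 a c s"
  have "sim \<eta> x y W0 a (c(s := b)) s = S" for b
    unfolding S_def by (rule sim_cong_coins) simp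
  then have "sim \<eta> x y W0 a (c(s := b)) (Suc s)
      = ((\<lambda>i k. fst S i k - \<eta> * snd S i * grad x y (theta (snd S) (fst S)) k),
         (\<lambda>i. snd S i + delta \<eta> (b i) (snd S i)))" for b
    unfolding sim_Suc_eq Let_def by simp
  moreover have "snd S i \<in> {0, \<eta> powr (1/4), - (\<eta> powr (1/4))}" for i
    unfolding S_def by (rule sim_weights_range[OF set_a0_vector_pmf_range[OF assms]])
  ultimately show ?thesis
    by (simp add: theta_at_def expectation_theta_after_coin_step)
qed

lemma expectation_theta_at_pmf:
  fixes x :: "'n::finite \<Rightarrow> 'd::finite \<Rightarrow> real" and W0 :: "'m::finite \<Rightarrow> 'd \<Rightarrow> real"
  assumes "\<eta> > 0"
  shows "measure_pmf.expectation (pair_pmf (a0_vector_pmf \<eta>) (coins_pmf t))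
           (\<lambda>(a, c). theta_at \<eta> x y t (W0, a, c) k) = 0"
proof (cases t)
  case 0
  then have "(\<lambda>(a, c). theta_at \<eta> x y t (W0, a, c) k) = (\<lambda>z. theta (fst z) W0 k)"
    by (auto simp: theta_at_def)
  then show ?thesis
    using expectation_theta_a0_vector_pmf[OF assms]
    by (simp add: expectation_pair_pmf_fst[where f = "\<lambda>a. theta a W0 k"])
next
  case (Suc s)
  let ?P = "a0_vector_pmf \<eta> :: ('m \<Rightarrow> real) pmf"
  let ?G = "\<lambda>a c. theta_at \<eta> x y (Suc s) (W0, a, c) k"
  have fin: "finite (set_pmf ?P)" "finite (set_pmf (coins_pmf s))"
    "finite (set_pmf (coin_vector_pmf :: ('m \<Rightarrow> bool) pmf))"
    by (simp_all add: finite_set_a0_vector_pmf finite_set_coins_pmf coin_vector_pmf_def)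
  have coins_Suc: "coins_pmf (Suc s) = map_pmf (\<lambda>(b, c). c(s := b)) (pair_pmf coin_vector_pmf (coins_pmf s))"
    unfolding coins_pmf_def lessThan_Suc by (subst Pi_pmf_insert) auto
  have "measure_pmf.expectation (pair_pmf ?P (coins_pmf (Suc s))) (\<lambda>(a, c). ?G a c)
      = measure_pmf.expectation (pair_pmf ?P (pair_pmf coin_vector_pmf (coins_pmf s)))
          (\<lambda>z. ?G (fst z) ((snd (snd z))(s := fst (snd z))))"
    by (simp add: coins_Suc pair_map_pmf2 case_prod_beta)
  also have "\<dots> = measure_pmf.expectation ?P (\<lambda>a. measure_pmf.expectation (pair_pmf coin_vector_pmf (coins_pmf s))
          (\<lambda>w. ?G a ((snd w)(s := fst w))))"
    using fin by (subst expectation_pair_pmf_finite) auto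
  also have "\<dots> = measure_pmf.expectation ?P (\<lambda>a. measure_pmf.expectation (coins_pmf s)
          (\<lambda>c. measure_pmf.expectation coin_vector_pmf (\<lambda>b. ?G a (c(s := b)))))"
    by (subst pair_commute_pmf) (simp add: case_prod_beta expectation_pair_pmf_finite[OF fin(2,3)])
  also have "\<dots> = measure_pmf.expectation ?P (\<lambda>a. 0)"
    by (intro integral_cong_AE AE_pmfI) (simp_all add: expectation_theta_at_Suc_last_coin)
  finally show ?thesis using Suc by simp
qed

lemma is_image_of_pmf_sim_model:
  "is_image_of_pmf (a0_measure \<eta> \<Otimes>\<^sub>M PiM {..<t} (\<lambda>_. PiM UNIV (\<lambda>_. measure_pmf (bernoulli_pmf (1/2)))))
     (pair_pmf (a0_vector_pmf \<eta>) (coins_pmf t)) (map_prod (\<lambda>a. a) (\<lambda>c. restrict c {..<t}))"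
  unfolding a0_measure_def a0_vector_pmf_def coins_pmf_def coin_vector_pmf_def
  by (intro is_image_of_pmf_pair is_image_of_pmf_PiM_UNIV is_image_of_pmf_PiM is_image_of_pmf_measure_pmf) simp

lemma measurable_theta_at_fixed_W0:
  fixes x :: "'n::finite \<Rightarrow> 'd::finite \<Rightarrow> real" and W0 :: "'m::finite \<Rightarrow> 'd \<Rightarrow> real"
  defines "C \<equiv> PiM (UNIV :: 'm set) (\<lambda>_. measure_pmf (bernoulli_pmf (1/2)))"
  shows "(\<lambda>r. theta_at \<eta> x y t (W0, r) k) \<in> borel_measurable (a0_measure \<eta> \<Otimes>\<^sub>M PiM {..<t} (\<lambda>_. C))"
proof -
  let ?M = "a0_measure \<eta> \<Otimes>\<^sub>M PiM {..<t} (\<lambda>_. C)"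
  have "(\<lambda>a. a i) \<in> measurable (a0_measure \<eta>) (measure_pmf (a0_pmf \<eta>))" for i
    unfolding a0_measure_def by (rule measurable_component_singleton) simp
  then have "(\<lambda>a. a i) \<in> borel_measurable (a0_measure \<eta>)" for i
    by (rule measurable_compose) simp
  then have "(\<lambda>r. fst r i) \<in> borel_measurable ?M" for i
    by (rule measurable_compose[OF measurable_fst])
  moreover have "(\<lambda>r. snd r s i) \<in> measurable ?M (count_space UNIV)" if "s < t" for s i
  proof -
    have "(\<lambda>c. c s) \<in> measurable (PiM {..<t} (\<lambda>_. C)) C"
      using that by (intro measurable_component_singleton) simp
    moreover have "(\<lambda>b. b i) \<in> measurable C (count_space UNIV)"
      unfolding C_def by measurable
    ultimately have "(\<lambda>c. c s i) \<in> measurable (PiM {..<t} (\<lambda>_. C)) (count_space UNIV)"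
      by (rule measurable_compose[where f = "\<lambda>c. c s" and g = "\<lambda>b. b i"])
    then show ?thesis
      by (rule measurable_compose[OF measurable_snd])
  qed
  ultimately have [measurable]:
    "(\<lambda>r. fst (sim \<eta> x y W0 (fst r) (snd r) t) i k) \<in> borel_measurable ?M"
    "(\<lambda>r. snd (sim \<eta> x y W0 (fst r) (snd r) t) i) \<in> borel_measurable ?M" for i k
    by (blast intro: measurable_sim)+
  have "(\<lambda>r. theta_at \<eta> x y t (W0, r) k)
      = (\<lambda>r. \<Sum>i\<in>UNIV. snd (sim \<eta> x y W0 (fst r) (snd r) t) i * fst (sim \<eta> x y W0 (fst r) (snd r) t) i k)"
    by (simp add: theta_at_def theta_def split_beta)
  then show ?thesis
    by simp
qed

lemma integral_theta_at_fixed_W0: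
  fixes x :: "'n::finite \<Rightarrow> 'd::finite \<Rightarrow> real" and W0 :: "'m::finite \<Rightarrow> 'd \<Rightarrow> real"
  assumes "\<eta> > 0"
  shows "(\<integral>r. theta_at \<eta> x y t (W0, r) k \<partial>(a0_measure \<eta> \<Otimes>\<^sub>M (coin_measure :: (nat \<Rightarrow> 'm \<Rightarrow> bool) measure))) = 0"
proof -
  define C where "C = PiM (UNIV :: 'm set) (\<lambda>_. measure_pmf (bernoulli_pmf (1/2)))"
  define G where "G = (\<lambda>r. theta_at \<eta> x y t (W0, r) k)"
  have G_restrict: "G (a, restrict c {..<t}) = G (a, c)" for a c
  proof -
    have "sim \<eta> x y W0 a (restrict c {..<t}) t = sim \<eta> x y W0 a c t"
      by (rule sim_cong_coins) simp
    then show ?thesis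
      by (simp add: G_def theta_at_def)
  qed
  have "prob_space C"
    unfolding C_def by (intro prob_space_PiM measure_pmf.prob_space_axioms)
  then have C: "product_prob_space (\<lambda>_ :: nat. C)"
    by (intro product_prob_spaceI)
  have A: "prob_space (a0_measure \<eta> :: ('m \<Rightarrow> real) measure)"
    unfolding a0_measure_def by (intro prob_space_PiM measure_pmf.prob_space_axioms)
  have G_meas: "G \<in> borel_measurable (a0_measure \<eta> \<Otimes>\<^sub>M PiM {..<t} (\<lambda>_. C))"
    unfolding G_def C_def by (rule measurable_theta_at_fixed_W0)
  have "(\<integral>r. G r \<partial>(a0_measure \<eta> \<Otimes>\<^sub>M PiM UNIV (\<lambda>_. C)))
      = (\<integral>r. G (fst r, restrict (snd r) {..<t}) \<partial>(a0_measure \<eta> \<Otimes>\<^sub>M PiM UNIV (\<lambda>_. C)))"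
    by (simp add: G_restrict)
  also have "\<dots> = integral\<^sup>L (a0_measure \<eta> \<Otimes>\<^sub>M PiM {..<t} (\<lambda>_. C)) G"
    by (rule integral_pair_PiM_restrict[OF A C _ _ G_meas]) simp_all
  also have "\<dots> = measure_pmf.expectation (pair_pmf (a0_vector_pmf \<eta>) (coins_pmf t))
      (\<lambda>z. G (map_prod (\<lambda>a. a) (\<lambda>c. restrict c {..<t}) z))"
    unfolding C_def by (rule integral_is_image_of_pmf[OF is_image_of_pmf_sim_model G_meas[unfolded C_def]])
  also have "\<dots> = measure_pmf.expectation (pair_pmf (a0_vector_pmf \<eta>) (coins_pmf t))
      (\<lambda>(a, c). theta_at \<eta> x y t (W0, a, c) k)"
    by (simp add: map_prod_def split_beta G_restrict) (simp add: G_def case_prod_unfold)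
  also have "\<dots> = 0"
    by (rule expectation_theta_at_pmf[OF assms])
  finally show ?thesis
    by (simp add: G_def C_def coin_measure_def)
qed

lemma integral_theta_at_eq_0:
  fixes x :: "'n::finite \<Rightarrow> 'd::finite \<Rightarrow> real"
  assumes "\<eta> > 0"
  shows "(\<integral>\<omega>. theta_at \<eta> x y t \<omega> k
            \<partial>(sim_space \<eta> :: (('m::finite \<Rightarrow> 'd \<Rightarrow> real) \<times> ('m \<Rightarrow> real) \<times> (nat \<Rightarrow> 'm \<Rightarrow> bool)) measure)) = 0"
proof -
  let ?W = "W0_measure :: ('m \<Rightarrow> 'd \<Rightarrow> real) measure"
  let ?R = "a0_measure \<eta> \<Otimes>\<^sub>M (coin_measure :: (nat \<Rightarrow> 'm \<Rightarrow> bool) measure)"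
  interpret W: prob_space ?W
    unfolding W0_measure_def by (intro prob_space_PiM prob_space_normal_density) simp
  interpret R: prob_space ?R
    unfolding a0_measure_def coin_measure_def
    by (intro prob_space_pair prob_space_PiM measure_pmf.prob_space_axioms)
  interpret pair_sigma_finite ?W ?R
    by unfold_locales
  \<comment> \<open>no integrability is needed: a non-integrable function has Bochner integral \<open>0\<close>\<close>
  show ?thesis
  proof (cases "integrable (?W \<Otimes>\<^sub>M ?R) (\<lambda>\<omega>. theta_at \<eta> x y t \<omega> k)")
    case True
    then have "(\<integral>\<omega>. theta_at \<eta> x y t \<omega> k \<partial>(?W \<Otimes>\<^sub>M ?R)) = (\<integral>W. (\<integral>r. theta_at \<eta> x y t (W, r) k \<partial>?R) \<partial>?W)"
      by (rule integral_fst'[symmetric])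
    then show ?thesis
      by (simp add: sim_space_def integral_theta_at_fixed_W0[OF assms])
  next
    case False
    then show ?thesis
      by (simp add: sim_space_def not_integrable_integral_eq)
  qed
qed

theorem lemmaB5:
  fixes \<eta> :: real and x :: "'n::finite \<Rightarrow> 'd::finite \<Rightarrow> real" and y :: "'n \<Rightarrow> real"
    and t :: nat and k :: 'd
  assumes "\<eta> > 0"
  shows "(\<integral>\<omega>. theta_at \<eta> x y t \<omega> k
            \<partial>(sim_space \<eta> :: (('m::finite \<Rightarrow> 'd \<Rightarrow> real) \<times> ('m \<Rightarrow> real) \<times> (nat \<Rightarrow> 'm \<Rightarrow> bool)) measure))
       = (\<integral>\<omega>. theta_at \<eta> x y 0 \<omega> k
            \<partial>(sim_space \<eta> :: (('m \<Rightarrow> 'd \<Rightarrow> real) \<times> ('m \<Rightarrow> real) \<times> (nat \<Rightarrow> 'm \<Rightarrow> bool)) measure))"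
  by (simp only: integral_theta_at_eq_0[OF assms])

end
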